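(* Let $t$ be a positive integer, let $n$ be sufficiently large compared to $t$, and let $G$ be an $n$-vertex graph with $e(G)\ge 5t^{3/2}n^{3/2}$. Then $G$ contains a non-empty $t^2$-rich collection of paths of length $2t-2$.
   Context: A path of length $2t-2$ has $2t-1$ vertices. For $\alpha>0$ and $k\in\mathbb{N}$, a collection $\mathcal{P}$ of labelled paths $x_1x_2\cdots x_k$ (distinct vertices) in $G$ is $\alpha$-rich if for every $x_1\cdots x_k\in\mathcal{P}$ and every $2\le i\le k-1$ there exist at least $\alpha$ distinct vertices $x_i'$ with $x_1\cdots x_{i-1}x_i'x_{i+1}\cdots x_k\in\mathcal{P}$. *)

theory Defs
  imports Complex_Main
begin

definition simple_graph :: "nat \<Rightarrow> nat set set \<Rightarrow> bool" where
  "simple_graph n E \<longleftrightarrow> (\<forall>e\<in>E. e \<subseteq> {..<n} \<and> card e = 2)"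

definition is_path :: "nat \<Rightarrow> nat set set \<Rightarrow> nat \<Rightarrow> nat list \<Rightarrow> bool" where
  "is_path n E k xs \<longleftrightarrow> length xs = k \<and> distinct xs \<and> set xs \<subseteq> {..<n} \<and>
     (\<forall>i. i + 1 < k \<longrightarrow> {xs ! i, xs ! (i+1)} \<in> E)"

text \<open>alpha-rich collection of labelled paths with k vertices (positions 2..k-1 in 1-based
  indexing are the list indices 1..k-2).\<close>
definition rich :: "nat \<Rightarrow> nat set set \<Rightarrow> nat \<Rightarrow> real \<Rightarrow> nat list set \<Rightarrow> bool" where
  "rich n E k \<alpha> P \<longleftrightarrow> (\<forall>xs\<in>P. is_path n E k xs) \<and>
     (\<forall>xs\<in>P. \<forall>i. 1 \<le> i \<and> i \<le> k - 2 \<longrightarrow> real (card {v. xs[i := v] \<in> P}) \<ge> \<alpha>)"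

end

theory Submission
  imports Defs
begin

text \<open>
  Pass to a non-empty subgraph \<open>F\<close> of minimum degree \<open>\<delta> = e(G)/(2n)\<close>: a subgraph minimising
  \<open>\<delta> |V(F)| - e(F)\<close> has no vertex of degree below \<open>\<delta>\<close>. Give a walk \<open>x\<^sub>1 \<dots> x\<^sub>k\<close> of \<open>F\<close> the weight
  \<open>1/(d(x\<^sub>1) \<cdots> d(x\<^sub>k\<^sub>-\<^sub>1))\<close>, i.e. \<open>|V(F)|\<close> times the probability that a random walk from a uniform
  vertex traces it. Each step revisits an earlier vertex with probability at most \<open>k/\<delta>\<close>, so the
  paths with \<open>k = 2t - 1\<close> vertices carry weight at least \<open>|V(F)|/2\<close>. The walks agreeing with a given
  one outside an inner position \<open>i\<close> have total weight at most the weight of the two remaining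
  pieces divided by \<open>\<delta>\<close>, and these caps sum to at most \<open>|V(F)|\<^sup>2/\<delta>\<^sup>2\<close> for each \<open>i\<close>. As
  \<open>t\<^sup>2 (k - 2) |V(F)|\<^sup>2/\<delta>\<^sup>2 < |V(F)|/2\<close>, repeatedly discarding all paths that agree outside some
  position \<open>i\<close> and have fewer than \<open>t\<^sup>2\<close> members never exhausts the weight, and what remains is a
  non-empty \<open>t\<^sup>2\<close>-rich collection.
\<close>

lemma card_punctured_class:
  assumes "\<forall>q\<in>Q. length q = length p" and "i < length p"
  shows "card {q\<in>Q. q[i := a] = p[i := a]} = card {v. p[i := v] \<in> Q}"
proof -
  have "{q\<in>Q. q[i := a] = p[i := a]} = (\<lambda>v. p[i := v]) ` {v. p[i := v] \<in> Q}"
  proof (intro equalityI subsetI)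
    fix q assume q: "q \<in> {q\<in>Q. q[i := a] = p[i := a]}"
    then have "(q[i := a])[i := q ! i] = (p[i := a])[i := q ! i]"
      by simp
    then have "q = p[i := q ! i]"
      by simp
    with q show "q \<in> (\<lambda>v. p[i := v]) ` {v. p[i := v] \<in> Q}"
      by (metis (mono_tags, lifting) image_eqI mem_Collect_eq)
  qed auto
  moreover have "inj_on (\<lambda>v. p[i := v]) {v. p[i := v] \<in> Q}"
    using assms(2) by (intro inj_onI) (metis nth_list_update_eq)
  ultimately show ?thesis
    by (simp add: card_image)
qed

lemma sum_caps_remove_class:
  fixes M :: "nat \<Rightarrow> 'a list \<Rightarrow> real"
  assumes "finite Q" "finite I" "i \<in> I" "p \<in> Q" and M: "\<forall>j c. 0 \<le> M j c"
  shows "(\<Sum>j\<in>I. \<Sum>c\<in>(\<lambda>q. q[j := a]) ` (Q - {q\<in>Q. q[i := a] = p[i := a]}). M j c)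
    \<le> (\<Sum>j\<in>I. \<Sum>c\<in>(\<lambda>q. q[j := a]) ` Q. M j c) - M i (p[i := a])"
proof -
  define S where "S X j = (\<Sum>c\<in>(\<lambda>q. q[j := a]) ` X. M j c)" for X j
  let ?Q' = "Q - {q\<in>Q. q[i := a] = p[i := a]}"
  have "S ?Q' i \<le> (\<Sum>c\<in>(\<lambda>q. q[i := a]) ` Q - {p[i := a]}. M i c)"
    unfolding S_def using \<open>finite Q\<close> M by (intro sum_mono2) auto
  also have "\<dots> = S Q i - M i (p[i := a])"
    unfolding S_def using \<open>finite Q\<close> \<open>p \<in> Q\<close> by (subst sum_diff1) auto
  finally have "S ?Q' i \<le> S Q i - M i (p[i := a])" .
  moreover have "S ?Q' j \<le> S Q j" for j
    unfolding S_def using \<open>finite Q\<close> M by (intro sum_mono2) auto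
  ultimately have "S ?Q' i + (\<Sum>j\<in>I - {i}. S ?Q' j) \<le> S Q i - M i (p[i := a]) + (\<Sum>j\<in>I - {i}. S Q j)"
    by (intro add_mono sum_mono) auto
  then show ?thesis
    unfolding S_def[symmetric]
    using sum.remove[OF \<open>finite I\<close> \<open>i \<in> I\<close>, of "S ?Q'"] sum.remove[OF \<open>finite I\<close> \<open>i \<in> I\<close>, of "S Q"]
    by linarith
qed

lemma exists_rich_subset:
  fixes Q :: "'a list set" and w :: "'a list \<Rightarrow> real" and M :: "nat \<Rightarrow> 'a list \<Rightarrow> real"
  assumes "finite Q" and "finite I" and "\<forall>q\<in>Q. length q = k" and "\<forall>i\<in>I. i < k"
    and "\<forall>i c. 0 \<le> M i c" and "\<forall>q\<in>Q. \<forall>i\<in>I. w q \<le> M i (q[i := a])" and "0 \<le> \<alpha>"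
    and "\<alpha> * (\<Sum>i\<in>I. \<Sum>c\<in>(\<lambda>q. q[i := a]) ` Q. M i c) < (\<Sum>q\<in>Q. w q)"
  shows "\<exists>P\<subseteq>Q. P \<noteq> {} \<and> (\<forall>xs\<in>P. \<forall>i\<in>I. \<alpha> \<le> real (card {v. xs[i := v] \<in> P}))"
  using assms
proof (induction "card Q" arbitrary: Q rule: less_induct)
  case less
  note fin = \<open>finite Q\<close> and len = \<open>\<forall>q\<in>Q. length q = k\<close> and M = \<open>\<forall>i c. 0 \<le> M i c\<close>
    and wM = \<open>\<forall>q\<in>Q. \<forall>i\<in>I. w q \<le> M i (q[i := a])\<close>
  define caps where "caps X = (\<Sum>i\<in>I. \<Sum>c\<in>(\<lambda>q. q[i := a]) ` X. M i c)" for X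
  show ?case
  proof (cases "\<forall>xs\<in>Q. \<forall>i\<in>I. \<alpha> \<le> real (card {v. xs[i := v] \<in> Q})")
    case True
    have "0 \<le> \<alpha> * caps Q"
      using \<open>0 \<le> \<alpha>\<close> M by (simp add: caps_def sum_nonneg)
    then have "Q \<noteq> {}"
      using less.prems by (auto simp: caps_def)
    with True show ?thesis
      by blast
  next
    case False
    then obtain p i where p: "p \<in> Q" and i: "i \<in> I" and few: "real (card {v. p[i := v] \<in> Q}) < \<alpha>"
      by (auto simp: not_le)
    define C where "C = {q\<in>Q. q[i := a] = p[i := a]}"
    have "i < length p"
      using p i len less.prems by auto
    then have "card C = card {v. p[i := v] \<in> Q}"
      unfolding C_def using p len by (intro card_punctured_class) auto
    have "(\<Sum>q\<in>C. w q) \<le> real (card C) * M i (p[i := a])"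
      using wM i by (intro sum_bounded_above) (fastforce simp: C_def)
    also have "\<dots> \<le> \<alpha> * M i (p[i := a])"
      using \<open>card C = _\<close> few M by (intro mult_right_mono) auto
    finally have wC: "(\<Sum>q\<in>C. w q) \<le> \<alpha> * M i (p[i := a])" .
    have "caps (Q - C) \<le> caps Q - M i (p[i := a])"
      unfolding caps_def C_def using fin less.prems p i M by (intro sum_caps_remove_class) auto
    then have "\<alpha> * caps (Q - C) \<le> \<alpha> * caps Q - \<alpha> * M i (p[i := a])"
      using \<open>0 \<le> \<alpha>\<close> by (metis mult_left_mono right_diff_distrib)
    also have "\<dots> < (\<Sum>q\<in>Q. w q) - (\<Sum>q\<in>C. w q)"
      using less.prems wC by (simp add: caps_def)
    also have "\<dots> = (\<Sum>q\<in>Q - C. w q)"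
      using fin by (simp add: sum_diff C_def)
    finally have "\<alpha> * caps (Q - C) < (\<Sum>q\<in>Q - C. w q)" .
    moreover have "card (Q - C) < card Q"
      using fin p by (intro psubset_card_mono) (auto simp: C_def)
    ultimately obtain P where "P \<subseteq> Q - C" "P \<noteq> {}"
      "\<forall>xs\<in>P. \<forall>i\<in>I. \<alpha> \<le> real (card {v. xs[i := v] \<in> P})"
      using less.hyps[of "Q - C"] less.prems by (auto simp: caps_def)
    then show ?thesis
      by blast
  qed
qed

definition neighbours :: "'a set set \<Rightarrow> 'a \<Rightarrow> 'a set" where
  "neighbours F v = {u. {v, u} \<in> F}"

definition walks :: "'a set set \<Rightarrow> nat \<Rightarrow> 'a list set" where
  "walks F L = {xs. length xs = L \<and> set xs \<subseteq> \<Union>F \<and> successively (\<lambda>x y. {x, y} \<in> F) xs}"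

definition paths :: "'a set set \<Rightarrow> nat \<Rightarrow> 'a list set" where
  "paths F L = {xs \<in> walks F L. distinct xs}"

definition walk_weight :: "'a set set \<Rightarrow> 'a list \<Rightarrow> real" where
  "walk_weight F xs = (\<Prod>x\<leftarrow>xs. 1 / real (card (neighbours F x)))"

lemma min_degree_pos:
  assumes "\<forall>v\<in>\<Union>F. \<delta> \<le> real (card (neighbours F v))" and "0 < \<delta>"
  shows "\<forall>v\<in>\<Union>F. 0 < card (neighbours F v)"
  using assms by (metis of_nat_0_less_iff order_less_le_trans)

lemma walk_weight_nonneg: "0 \<le> walk_weight F xs"
  unfolding walk_weight_def by (induction xs) auto

lemma walk_weight_snoc: "walk_weight F (xs @ [x]) = walk_weight F xs / real (card (neighbours F x))"
  by (simp add: walk_weight_def)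

lemma walk_weight_append_Cons_le:
  assumes "\<delta> \<le> real (card (neighbours F x))" and "0 < \<delta>"
  shows "walk_weight F (xs @ x # ys) \<le> walk_weight F xs * walk_weight F ys / \<delta>"
proof -
  have "walk_weight F (xs @ x # ys) = walk_weight F xs * (walk_weight F ys / real (card (neighbours F x)))"
    by (simp add: walk_weight_def)
  also have "\<dots> \<le> walk_weight F xs * (walk_weight F ys / \<delta>)"
    using assms by (intro mult_left_mono divide_left_mono) (auto simp: walk_weight_nonneg)
  finally show ?thesis by simp
qed

lemma finite_walks: "finite (\<Union>F) \<Longrightarrow> finite (walks F L)"
  by (rule finite_subset[OF _ finite_lists_length_eq[of "\<Union>F" L]]) (auto simp: walks_def)

lemma finite_paths: "finite (\<Union>F) \<Longrightarrow> finite (paths F L)"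
  by (simp add: paths_def finite_walks)

lemma walks_one: "walks F (Suc 0) = (\<lambda>v. [v]) ` \<Union>F"
  by (auto simp: walks_def length_Suc_conv)

lemma paths_one: "paths F (Suc 0) = walks F (Suc 0)"
  by (auto simp: paths_def walks_one)

lemma walks_Suc:
  assumes "1 \<le> L"
  shows "walks F (Suc L) = (\<lambda>(xs, y). xs @ [y]) ` Sigma (walks F L) (\<lambda>xs. neighbours F (last xs))"
proof (intro equalityI subsetI)
  fix zs assume zs: "zs \<in> walks F (Suc L)"
  then have "zs \<noteq> []"
    by (auto simp: walks_def)
  then obtain xs y where zs_eq: "zs = xs @ [y]"
    by (cases zs rule: rev_cases) auto
  with zs assms have "xs \<in> walks F L" "y \<in> neighbours F (last xs)"
    by (auto simp: walks_def neighbours_def successively_append_iff)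
  with zs_eq show "zs \<in> (\<lambda>(xs, y). xs @ [y]) ` Sigma (walks F L) (\<lambda>xs. neighbours F (last xs))"
    by auto
next
  fix zs assume "zs \<in> (\<lambda>(xs, y). xs @ [y]) ` Sigma (walks F L) (\<lambda>xs. neighbours F (last xs))"
  then show "zs \<in> walks F (Suc L)"
    by (auto simp: walks_def neighbours_def successively_append_iff; blast)
qed

lemma paths_Suc:
  assumes "1 \<le> L"
  shows "paths F (Suc L) =
    (\<lambda>(xs, y). xs @ [y]) ` Sigma (paths F L) (\<lambda>xs. neighbours F (last xs) - set xs)"
  unfolding paths_def walks_Suc[OF assms] by auto

lemma take_in_walks: "q \<in> walks F k \<Longrightarrow> i \<le> k \<Longrightarrow> take i q \<in> walks F i"
  using successively_append_iff[of _ "take i q" "drop i q"] set_take_subset[of i q]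
  by (auto simp: walks_def)

lemma drop_in_walks: "q \<in> walks F k \<Longrightarrow> drop i q \<in> walks F (k - i)"
  using successively_append_iff[of _ "take i q" "drop i q"] set_drop_subset[of i q]
  by (auto simp: walks_def)

lemma last_in_walk:
  assumes "xs \<in> walks F L" and "xs \<noteq> []"
  shows "last xs \<in> \<Union>F"
proof -
  have "set xs \<subseteq> \<Union>F"
    using assms(1) by (simp add: walks_def)
  then show ?thesis
    using last_in_set[OF assms(2)] by (rule subsetD)
qed

lemma sum_snoc_Sigma:
  assumes "finite A" and "\<And>xs. xs \<in> A \<Longrightarrow> finite (B xs)"
  shows "(\<Sum>zs\<in>(\<lambda>(xs, y). xs @ [y]) ` Sigma A B. f zs) = (\<Sum>xs\<in>A. \<Sum>y\<in>B xs. f (xs @ [y]))"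
proof -
  have "inj_on (\<lambda>(xs, y). xs @ [y]) (Sigma A B)"
    by (rule inj_onI) auto
  then have "(\<Sum>zs\<in>(\<lambda>(xs, y). xs @ [y]) ` Sigma A B. f zs) = (\<Sum>(xs, y)\<in>Sigma A B. f (xs @ [y]))"
    by (simp add: sum.reindex case_prod_unfold)
  also have "\<dots> = (\<Sum>xs\<in>A. \<Sum>y\<in>B xs. f (xs @ [y]))"
    by (rule sum.Sigma[symmetric]) (use assms in auto)
  finally show ?thesis .
qed

lemma sum_walks_weight:
  assumes fin: "finite (\<Union>F)" and deg: "\<forall>v\<in>\<Union>F. 0 < card (neighbours F v)" and L: "1 \<le> L"
  shows "(\<Sum>xs\<in>walks F L. walk_weight F (butlast xs)) = real (card (\<Union>F))"
  using L
proof (induction L rule: nat_induct_at_least)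
  case base
  show ?case
    by (simp add: walks_one sum.reindex inj_on_def walk_weight_def)
next
  case (Suc L)
  have fin_nbrs: "finite (neighbours F v)" for v
    using fin by (rule finite_subset[rotated]) (auto simp: neighbours_def)
  have "(\<Sum>xs\<in>walks F (Suc L). walk_weight F (butlast xs))
      = (\<Sum>xs\<in>walks F L. \<Sum>y\<in>neighbours F (last xs). walk_weight F xs)"
    unfolding walks_Suc[OF Suc.hyps] by (simp add: sum_snoc_Sigma finite_walks fin fin_nbrs)
  also have "\<dots> = (\<Sum>xs\<in>walks F L. walk_weight F (butlast xs))"
  proof (rule sum.cong[OF refl])
    fix xs assume xs: "xs \<in> walks F L"
    then have "xs \<noteq> []"
      using Suc.hyps by (auto simp: walks_def)
    then have "last xs \<in> \<Union>F"
      by (rule last_in_walk[OF xs])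
    then have "0 < card (neighbours F (last xs))"
      using deg by blast
    moreover have "walk_weight F xs = walk_weight F (butlast xs) / real (card (neighbours F (last xs)))"
      using walk_weight_snoc[of F "butlast xs" "last xs"] \<open>xs \<noteq> []\<close> by simp
    ultimately show "(\<Sum>y\<in>neighbours F (last xs). walk_weight F xs) = walk_weight F (butlast xs)"
      by simp
  qed
  finally show ?case
    using Suc.IH by simp
qed

lemma sum_walks_weight_le:
  assumes fin: "finite (\<Union>F)" and deg: "\<forall>v\<in>\<Union>F. \<delta> \<le> real (card (neighbours F v))"
    and "0 < \<delta>" and L: "1 \<le> L"
  shows "(\<Sum>xs\<in>walks F L. walk_weight F xs) \<le> real (card (\<Union>F)) / \<delta>"
proof -
  have "(\<Sum>xs\<in>walks F L. walk_weight F xs) \<le> (\<Sum>xs\<in>walks F L. walk_weight F (butlast xs) / \<delta>)"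
  proof (rule sum_mono)
    fix xs assume xs: "xs \<in> walks F L"
    then have "xs \<noteq> []"
      using L by (auto simp: walks_def)
    then have "last xs \<in> \<Union>F"
      by (rule last_in_walk[OF xs])
    then have "walk_weight F (butlast xs @ [last xs]) \<le> walk_weight F (butlast xs) / \<delta>"
      using walk_weight_append_Cons_le[of \<delta> F "last xs" "butlast xs" "[]"] deg \<open>0 < \<delta>\<close>
      by (simp add: walk_weight_def)
    then show "walk_weight F xs \<le> walk_weight F (butlast xs) / \<delta>"
      using \<open>xs \<noteq> []\<close> by simp
  qed
  also have "\<dots> = real (card (\<Union>F)) / \<delta>"
  proof -
    show ?thesis
      using min_degree_pos[OF deg \<open>0 < \<delta>\<close>]
      by (simp add: sum_divide_distrib[symmetric] sum_walks_weight[OF fin _ L])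
  qed
  finally show ?thesis .
qed

lemma extension_weight_ge:
  fixes K :: nat
  assumes deg: "\<forall>v\<in>\<Union>F. \<delta> \<le> real (card (neighbours F v))" and "0 < \<delta>"
    and xs: "xs \<in> paths F L" and L: "1 \<le> L" "L \<le> K"
  shows "(1 - K / \<delta>) * walk_weight F (butlast xs)
    \<le> (\<Sum>y\<in>neighbours F (last xs) - set xs. walk_weight F xs)"
proof -
  define d where "d = real (card (neighbours F (last xs)))"
  have ne: "xs \<noteq> []" and len: "length xs = L"
    using xs L by (auto simp: paths_def walks_def)
  then have "last xs \<in> \<Union>F"
    using xs by (intro last_in_walk) (auto simp: paths_def)
  then have "\<delta> \<le> d"
    using deg unfolding d_def by blast
  have "card (neighbours F (last xs)) - card (set xs) \<le> card (neighbours F (last xs) - set xs)"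
    by (rule diff_card_le_card_Diff) simp
  then have free: "d - K \<le> real (card (neighbours F (last xs) - set xs))"
    using card_length[of xs] len L unfolding d_def by linarith
  have "1 - K / \<delta> \<le> 1 - K / d"
    using \<open>\<delta> \<le> d\<close> \<open>0 < \<delta>\<close> by (intro diff_left_mono divide_left_mono) auto
  also have "\<dots> = (d - K) / d"
    using \<open>\<delta> \<le> d\<close> \<open>0 < \<delta>\<close> by (simp add: field_simps)
  also have "\<dots> \<le> real (card (neighbours F (last xs) - set xs)) / d"
    using free \<open>\<delta> \<le> d\<close> \<open>0 < \<delta>\<close> by (intro divide_right_mono) auto
  finally have "(1 - K / \<delta>) * walk_weight F (butlast xs)
      \<le> real (card (neighbours F (last xs) - set xs)) / d * walk_weight F (butlast xs)"
    by (rule mult_right_mono) (rule walk_weight_nonneg)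
  also have "\<dots> = (\<Sum>y\<in>neighbours F (last xs) - set xs. walk_weight F xs)"
    using walk_weight_snoc[of F "butlast xs" "last xs"] ne by (simp add: d_def)
  finally show ?thesis .
qed

lemma sum_paths_weight_ge:
  fixes K :: nat
  assumes fin: "finite (\<Union>F)" and deg: "\<forall>v\<in>\<Union>F. \<delta> \<le> real (card (neighbours F v))"
    and "0 < \<delta>" and "real K \<le> \<delta>" and L: "1 \<le> L" "L \<le> K"
  shows "real (card (\<Union>F)) * (1 - K / \<delta>) ^ (L - 1)
    \<le> (\<Sum>xs\<in>paths F L. walk_weight F (butlast xs))"
  using L
proof (induction L rule: nat_induct_at_least)
  case base
  have "(\<Sum>xs\<in>walks F 1. walk_weight F (butlast xs)) = real (card (\<Union>F))"
    by (rule sum_walks_weight[OF fin min_degree_pos[OF deg \<open>0 < \<delta>\<close>]]) simp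
  then show ?case
    by (simp add: paths_one)
next
  case (Suc L)
  have fin_nbrs: "finite (neighbours F v - set xs)" for v xs
    using fin by (rule finite_subset[rotated]) (auto simp: neighbours_def)
  have IH: "real (card (\<Union>F)) * (1 - K / \<delta>) ^ (L - 1)
      \<le> (\<Sum>xs\<in>paths F L. walk_weight F (butlast xs))"
    using Suc.IH Suc.prems by simp
  have "0 \<le> 1 - K / \<delta>"
    using \<open>real K \<le> \<delta>\<close> \<open>0 < \<delta>\<close> by simp
  have "real (card (\<Union>F)) * (1 - K / \<delta>) ^ (Suc L - 1)
      = (1 - K / \<delta>) * (real (card (\<Union>F)) * (1 - K / \<delta>) ^ (L - 1))"
    using Suc.hyps by (simp add: power_eq_if)
  also have "\<dots> \<le> (1 - K / \<delta>) * (\<Sum>xs\<in>paths F L. walk_weight F (butlast xs))"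
    using IH \<open>0 \<le> 1 - K / \<delta>\<close> by (rule mult_left_mono)
  also have "\<dots> \<le> (\<Sum>xs\<in>paths F L. \<Sum>y\<in>neighbours F (last xs) - set xs. walk_weight F xs)"
    unfolding sum_distrib_left
  proof (rule sum_mono)
    fix xs assume "xs \<in> paths F L"
    then show "(1 - K / \<delta>) * walk_weight F (butlast xs)
        \<le> (\<Sum>y\<in>neighbours F (last xs) - set xs. walk_weight F xs)"
      using Suc.prems by (intro extension_weight_ge[OF deg \<open>0 < \<delta>\<close> _ Suc.hyps]) auto
  qed
  also have "\<dots> = (\<Sum>zs\<in>(\<lambda>(xs, y). xs @ [y]) ` Sigma (paths F L) (\<lambda>xs. neighbours F (last xs) - set xs).
      walk_weight F (butlast zs))"
    by (subst sum_snoc_Sigma[OF finite_paths[OF fin] fin_nbrs]) simp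
  also have "\<dots> = (\<Sum>xs\<in>paths F (Suc L). walk_weight F (butlast xs))"
    by (simp only: paths_Suc[OF Suc.hyps])
  finally show ?case .
qed

lemma sum_paths_weight_ge_half:
  assumes fin: "finite (\<Union>F)" and deg: "\<forall>v\<in>\<Union>F. \<delta> \<le> real (card (neighbours F v))"
    and "1 \<le> k" and k_small: "2 * real k * real k \<le> \<delta>"
  shows "real (card (\<Union>F)) / 2 \<le> (\<Sum>xs\<in>paths F k. walk_weight F (butlast xs))"
proof -
  have "real k * 1 \<le> real k * (2 * real k)"
    using \<open>1 \<le> k\<close> by (intro mult_left_mono) auto
  then have "real k \<le> \<delta>"
    using k_small by (simp add: mult.assoc)
  then have "0 < \<delta>"
    using \<open>1 \<le> k\<close> by linarith
  have "real (k - 1) * real k \<le> real k * real k"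
    by (intro mult_right_mono) auto
  then have "real (k - 1) * (real k / \<delta>) \<le> 1 / 2"
    using k_small \<open>0 < \<delta>\<close> by (simp add: pos_divide_le_eq)
  moreover have "1 - real (k - 1) * (real k / \<delta>) \<le> (1 - real k / \<delta>) ^ (k - 1)"
    using Bernoulli_inequality[of "- (real k / \<delta>)" "k - 1"] \<open>real k \<le> \<delta>\<close> \<open>0 < \<delta>\<close>
    by simp
  ultimately have "1 / 2 \<le> (1 - real k / \<delta>) ^ (k - 1)"
    by linarith
  then have "real (card (\<Union>F)) * (1 / 2) \<le> real (card (\<Union>F)) * (1 - real k / \<delta>) ^ (k - 1)"
    by (rule mult_left_mono) simp
  also have "\<dots> \<le> (\<Sum>xs\<in>paths F k. walk_weight F (butlast xs))"
    by (rule sum_paths_weight_ge[OF fin deg \<open>0 < \<delta>\<close> \<open>real k \<le> \<delta>\<close> \<open>1 \<le> k\<close> order_refl])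
  finally show ?thesis
    by simp
qed

definition puncture_bound :: "'a set set \<Rightarrow> real \<Rightarrow> nat \<Rightarrow> 'a list \<Rightarrow> real" where
  "puncture_bound F \<delta> i c = walk_weight F (take i c) * walk_weight F (butlast (drop (Suc i) c)) / \<delta>"

lemma puncture_bound_nonneg: "0 \<le> \<delta> \<Longrightarrow> 0 \<le> puncture_bound F \<delta> i c"
  by (simp add: puncture_bound_def walk_weight_nonneg)

lemma walk_weight_le_puncture_bound:
  assumes deg: "\<forall>v\<in>\<Union>F. \<delta> \<le> real (card (neighbours F v))" and "0 < \<delta>"
    and q: "q \<in> walks F k" and i: "Suc i < k"
  shows "walk_weight F (butlast q) \<le> puncture_bound F \<delta> i (q[i := a])"
proof -
  have len: "length q = k"
    using q by (simp add: walks_def)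
  have "q = take i q @ q ! i # drop (Suc i) q"
    using i len by (simp add: id_take_nth_drop)
  moreover have "drop (Suc i) q \<noteq> []"
    using i len by simp
  ultimately have split: "butlast q = take i q @ q ! i # butlast (drop (Suc i) q)"
    by (metis butlast.simps(2) butlast_append list.simps(3))
  have "set q \<subseteq> \<Union>F"
    using q by (simp add: walks_def)
  then have "q ! i \<in> \<Union>F"
    by (rule subsetD) (use i len in simp)
  then have "walk_weight F (butlast q) \<le> walk_weight F (take i q) * walk_weight F (butlast (drop (Suc i) q)) / \<delta>"
    unfolding split using deg \<open>0 < \<delta>\<close> by (intro walk_weight_append_Cons_le) auto
  then show ?thesis
    by (simp add: puncture_bound_def)
qed

lemma inj_on_take_drop_update:
  "inj_on (\<lambda>c. (take i c, drop (Suc i) c)) ((\<lambda>q. q[i := a]) ` {q. i < length q})"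
proof (rule inj_onI)
  fix c c' assume "c \<in> (\<lambda>q. q[i := a]) ` {q. i < length q}" "c' \<in> (\<lambda>q. q[i := a]) ` {q. i < length q}"
  then have "c = take i c @ a # drop (Suc i) c" "c' = take i c' @ a # drop (Suc i) c'"
    by (auto simp: upd_conv_take_nth_drop)
  moreover assume "(take i c, drop (Suc i) c) = (take i c', drop (Suc i) c')"
  ultimately show "c = c'"
    by (metis prod.inject)
qed

lemma sum_puncture_bound_le:
  assumes fin: "finite (\<Union>F)" and deg: "\<forall>v\<in>\<Union>F. \<delta> \<le> real (card (neighbours F v))" and "0 < \<delta>"
    and i: "1 \<le> i" "Suc (Suc i) \<le> k"
  shows "(\<Sum>c\<in>(\<lambda>q. q[i := a]) ` walks F k. puncture_bound F \<delta> i c) \<le> (real (card (\<Union>F)))\<^sup>2 / \<delta>\<^sup>2"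
proof -
  define split where "split c = (take i c, drop (Suc i) c)" for c :: "'a list"
  define h where "h = (\<lambda>(b, e). walk_weight F b * walk_weight F (butlast e) / \<delta>)"
  define C where "C = (\<lambda>q. q[i := a]) ` walks F k"
  have "C \<subseteq> (\<lambda>q. q[i := a]) ` {q. i < length q}"
    using i by (auto simp: C_def walks_def)
  then have inj: "inj_on split C"
    unfolding split_def by (rule inj_on_subset[OF inj_on_take_drop_update])
  have "split ` C \<subseteq> walks F i \<times> walks F (k - Suc i)"
    using i by (auto simp: split_def C_def take_in_walks drop_in_walks)
  have "(\<Sum>c\<in>C. puncture_bound F \<delta> i c) = (\<Sum>p\<in>split ` C. h p)"
    unfolding sum.reindex[OF inj] by (simp add: split_def h_def puncture_bound_def)
  also have "\<dots> \<le> (\<Sum>p\<in>walks F i \<times> walks F (k - Suc i). h p)"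
    using \<open>split ` C \<subseteq> _\<close> \<open>0 < \<delta>\<close>
    by (intro sum_mono2) (auto simp: finite_walks fin h_def walk_weight_nonneg)
  also have "\<dots> = (\<Sum>b\<in>walks F i. walk_weight F b) * (\<Sum>e\<in>walks F (k - Suc i). walk_weight F (butlast e)) / \<delta>"
    by (simp add: h_def sum.cartesian_product[symmetric] sum_product sum_divide_distrib)
  also have "\<dots> \<le> (real (card (\<Union>F)) / \<delta>) * real (card (\<Union>F)) / \<delta>"
  proof -
    have B: "(\<Sum>e\<in>walks F (k - Suc i). walk_weight F (butlast e)) = real (card (\<Union>F))"
      using i by (intro sum_walks_weight[OF fin min_degree_pos[OF deg \<open>0 < \<delta>\<close>]]) auto
    show ?thesis
      unfolding B using sum_walks_weight_le[OF fin deg \<open>0 < \<delta>\<close> i(1)] \<open>0 < \<delta>\<close>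
      by (intro divide_right_mono mult_right_mono) auto
  qed
  finally show ?thesis
    by (simp add: C_def power2_eq_square)
qed

lemma incident_edges_eq:
  assumes "\<forall>e\<in>F. card e = 2"
  shows "{e\<in>F. v \<in> e} = (\<lambda>u. {v, u}) ` neighbours F v"
proof (intro equalityI subsetI)
  fix e assume e: "e \<in> {e\<in>F. v \<in> e}"
  then obtain x y where "e = {x, y}"
    using assms card_2_iff[of e] by auto
  with e have "e = {v, if x = v then y else x}"
    by auto
  with e show "e \<in> (\<lambda>u. {v, u}) ` neighbours F v"
    by (auto simp: neighbours_def)
qed (auto simp: neighbours_def)

lemma exists_subgraph_min_degree:
  fixes E :: "'a set set" and c :: real
  assumes "finite E" and two: "\<forall>e\<in>E. card e = 2" and "0 \<le> c"
    and dense: "c * real (card (\<Union>E)) < real (card E)"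
  shows "\<exists>F\<subseteq>E. F \<noteq> {} \<and> (\<forall>v\<in>\<Union>F. c \<le> real (card (neighbours F v)))"
proof -
  define excess where "excess G = c * real (card (\<Union>G)) - real (card G)" for G :: "'a set set"
  obtain F where "F \<subseteq> E" and min: "\<And>G. G \<subseteq> E \<Longrightarrow> excess F \<le> excess G"
    using ex_is_arg_min_if_finite[of "Pow E" excess] \<open>finite E\<close>
    by (auto simp: is_arg_min_linorder)
  have two_F: "\<forall>e\<in>F. card e = 2"
    using two \<open>F \<subseteq> E\<close> by blast
  have "finite F"
    using \<open>F \<subseteq> E\<close> \<open>finite E\<close> by (rule finite_subset)
  then have "finite (\<Union>F)"
    using \<open>F \<subseteq> E\<close> two by (intro finite_Union) (auto simp: card_ge_0_finite)
  have "excess F < 0"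
    using min[of E] dense by (simp add: excess_def)
  then have "F \<noteq> {}"
    using \<open>0 \<le> c\<close> by (auto simp: excess_def)
  moreover have "c \<le> real (card (neighbours F v))" if v: "v \<in> \<Union>F" for v
  proof (rule ccontr)
    assume low: "\<not> c \<le> real (card (neighbours F v))"
    define F' where "F' = F - {e\<in>F. v \<in> e}"
    have "finite (neighbours F v)"
      using \<open>finite (\<Union>F)\<close> by (rule finite_subset[rotated]) (auto simp: neighbours_def)
    then have "card {e\<in>F. v \<in> e} \<le> card (neighbours F v)"
      unfolding incident_edges_eq[OF two_F] by (rule card_image_le)
    then have fewer_edges: "real (card F) - c < real (card F')"
      using low \<open>finite F\<close> by (simp add: F'_def card_Diff_subset of_nat_diff card_mono)
    have "card (\<Union>F') < card (\<Union>F)"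
      using v \<open>finite (\<Union>F)\<close> by (intro psubset_card_mono) (auto simp: F'_def)
    then have "real (card (\<Union>F')) \<le> real (card (\<Union>F)) - 1"
      by linarith
    then have fewer_vertices: "c * real (card (\<Union>F')) \<le> c * real (card (\<Union>F)) - c"
      using mult_left_mono \<open>0 \<le> c\<close> by (fastforce simp: right_diff_distrib)
    have "F' \<subseteq> E"
      using \<open>F \<subseteq> E\<close> by (auto simp: F'_def)
    then show False
      using min[of F'] fewer_edges fewer_vertices unfolding excess_def by linarith
  qed
  ultimately show ?thesis
    using \<open>F \<subseteq> E\<close> by blast
qed

lemma exists_rich_paths_min_degree:
  fixes \<alpha> \<delta> :: real
  assumes fin: "finite (\<Union>F)" and "\<Union>F \<noteq> {}" and deg: "\<forall>v\<in>\<Union>F. \<delta> \<le> real (card (neighbours F v))"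
    and "1 \<le> k" and k_small: "2 * real k * real k \<le> \<delta>" and "0 \<le> \<alpha>"
    and \<alpha>_small: "2 * \<alpha> * real (k - 2) * real (card (\<Union>F)) < \<delta>\<^sup>2"
  shows "\<exists>P\<subseteq>paths F k. P \<noteq> {} \<and> (\<forall>xs\<in>P. \<forall>i\<in>{1..k - 2}. \<alpha> \<le> real (card {v. xs[i := v] \<in> P}))"
proof -
  define m where "m = real (card (\<Union>F))"
  \<comment> \<open>The entry written into the punctured position is irrelevant; \<open>undefined\<close> is a placeholder.\<close>
  define caps where "caps = (\<Sum>i\<in>{1..k - 2}. \<Sum>c\<in>(\<lambda>q. q[i := undefined]) ` paths F k. puncture_bound F \<delta> i c)"
  have "0 < 2 * real k * real k"
    using \<open>1 \<le> k\<close> by simp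
  then have "0 < \<delta>"
    using k_small by linarith
  have "0 < m"
    using fin \<open>\<Union>F \<noteq> {}\<close> by (simp add: m_def card_gt_0_iff)
  have "(\<Sum>c\<in>(\<lambda>q. q[i := undefined]) ` paths F k. puncture_bound F \<delta> i c) \<le> m\<^sup>2 / \<delta>\<^sup>2"
    if "i \<in> {1..k - 2}" for i
  proof -
    have "(\<lambda>q. q[i := undefined]) ` paths F k \<subseteq> (\<lambda>q. q[i := undefined]) ` walks F k"
      by (auto simp: paths_def)
    then have "(\<Sum>c\<in>(\<lambda>q. q[i := undefined]) ` paths F k. puncture_bound F \<delta> i c)
        \<le> (\<Sum>c\<in>(\<lambda>q. q[i := undefined]) ` walks F k. puncture_bound F \<delta> i c)"
      using \<open>0 < \<delta>\<close> by (intro sum_mono2) (auto simp: finite_walks fin puncture_bound_nonneg)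
    also have "\<dots> \<le> m\<^sup>2 / \<delta>\<^sup>2"
      unfolding m_def using that by (intro sum_puncture_bound_le[OF fin deg \<open>0 < \<delta>\<close>]) auto
    finally show ?thesis .
  qed
  then have "caps \<le> real (card {1..k - 2}) * (m\<^sup>2 / \<delta>\<^sup>2)"
    unfolding caps_def by (rule sum_bounded_above)
  then have "\<alpha> * caps \<le> (2 * \<alpha> * real (k - 2) * m) * (m / (2 * \<delta>\<^sup>2))"
    using mult_left_mono[OF _ \<open>0 \<le> \<alpha>\<close>] by (fastforce simp: power2_eq_square)
  also have "\<dots> < \<delta>\<^sup>2 * (m / (2 * \<delta>\<^sup>2))"
    using \<alpha>_small \<open>0 < m\<close> \<open>0 < \<delta>\<close> by (intro mult_strict_right_mono) (auto simp: m_def)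
  also have "\<dots> = m / 2"
    using \<open>0 < \<delta>\<close> by simp
  also have "\<dots> \<le> (\<Sum>q\<in>paths F k. walk_weight F (butlast q))"
    unfolding m_def by (rule sum_paths_weight_ge_half[OF fin deg \<open>1 \<le> k\<close> k_small])
  finally have "\<alpha> * caps < (\<Sum>q\<in>paths F k. walk_weight F (butlast q))" .
  moreover have "\<forall>q\<in>paths F k. \<forall>i\<in>{1..k - 2}.
      walk_weight F (butlast q) \<le> puncture_bound F \<delta> i (q[i := undefined])"
    using walk_weight_le_puncture_bound[OF deg \<open>0 < \<delta>\<close>] by (auto simp: paths_def)
  moreover have "\<forall>q\<in>paths F k. length q = k"
    by (simp add: paths_def walks_def)
  ultimately show ?thesis
    unfolding caps_def using finite_paths[OF fin] \<open>0 < \<delta>\<close> \<open>0 \<le> \<alpha>\<close>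
    by (intro exists_rich_subset[where k = k]) (auto simp: puncture_bound_nonneg)
qed

lemma is_path_if_in_paths:
  assumes "F \<subseteq> E" and "\<Union>E \<subseteq> {..<n}" and "xs \<in> paths F k"
  shows "is_path n E k xs"
proof -
  have "set xs \<subseteq> \<Union>F"
    using assms(3) by (simp add: paths_def walks_def)
  then have "set xs \<subseteq> {..<n}"
    using Union_mono[OF assms(1)] assms(2) by (meson order_trans)
  then show ?thesis
    using assms by (auto simp: is_path_def paths_def walks_def successively_conv_nth)
qed

lemma exists_rich_paths:
  fixes \<alpha> \<delta> :: real
  assumes G: "simple_graph n E" and dense: "\<delta> * real n < real (card E)"
    and "1 \<le> k" and k_small: "2 * real k * real k \<le> \<delta>" and "0 \<le> \<alpha>"
    and \<alpha>_small: "2 * \<alpha> * real (k - 2) * real n < \<delta>\<^sup>2"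
  shows "\<exists>P. P \<noteq> {} \<and> rich n E k \<alpha> P"
proof -
  have V: "\<Union>E \<subseteq> {..<n}" and two: "\<forall>e\<in>E. card e = 2"
    using G by (auto simp: simple_graph_def)
  then have "finite E"
    by (meson Sup_le_iff finite_Pow_iff finite_lessThan finite_subset subset_Pow_Union)
  have "0 \<le> \<delta>"
    using k_small by (smt (verit) mult_nonneg_nonneg of_nat_0_le_iff)
  have "card (\<Union>E) \<le> n"
    using V card_mono[of "{..<n}"] by fastforce
  then have "\<delta> * real (card (\<Union>E)) < real (card E)"
    using dense \<open>0 \<le> \<delta>\<close> by (smt (verit) mult_left_mono of_nat_le_iff)
  then obtain F where "F \<subseteq> E" and "F \<noteq> {}" and deg: "\<forall>v\<in>\<Union>F. \<delta> \<le> real (card (neighbours F v))"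
    using exists_subgraph_min_degree[OF \<open>finite E\<close> two \<open>0 \<le> \<delta>\<close>] by blast
  have VF: "\<Union>F \<subseteq> {..<n}"
    using \<open>F \<subseteq> E\<close> V by blast
  then have "finite (\<Union>F)"
    by (rule finite_subset) simp
  have "\<Union>F \<noteq> {}"
    using \<open>F \<noteq> {}\<close> \<open>F \<subseteq> E\<close> two by (fastforce simp: card_2_iff)
  have "card (\<Union>F) \<le> n"
    using VF card_mono[of "{..<n}"] by fastforce
  then have "2 * \<alpha> * real (k - 2) * real (card (\<Union>F)) < \<delta>\<^sup>2"
    using \<alpha>_small \<open>0 \<le> \<alpha>\<close> by (smt (verit) mult_left_mono mult_nonneg_nonneg of_nat_0_le_iff of_nat_le_iff)
  then obtain P where "P \<subseteq> paths F k" "P \<noteq> {}"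
    and P_rich: "\<forall>xs\<in>P. \<forall>i\<in>{1..k - 2}. \<alpha> \<le> real (card {v. xs[i := v] \<in> P})"
    using exists_rich_paths_min_degree[OF \<open>finite (\<Union>F)\<close> \<open>\<Union>F \<noteq> {}\<close> deg \<open>1 \<le> k\<close> k_small \<open>0 \<le> \<alpha>\<close>]
    by blast
  then have "rich n E k \<alpha> P"
    using is_path_if_in_paths[OF \<open>F \<subseteq> E\<close> V] by (auto simp: rich_def)
  with \<open>P \<noteq> {}\<close> show ?thesis
    by blast
qed

lemma powr_three_halves_squared:
  fixes x :: real
  assumes "0 < x"
  shows "(x powr (3/2))\<^sup>2 = x ^ 3"
proof -
  have "(x powr (3/2))\<^sup>2 = x powr (3/2 + 3/2)"
    by (simp add: power2_eq_square powr_add[symmetric])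
  also have "\<dots> = x ^ 3"
    using assms by (simp add: powr_numeral)
  finally show ?thesis .
qed

lemma density_bounds:
  fixes t x e :: real
  assumes "1 \<le> t" and "11 * t \<le> x" and e: "5 * t powr (3/2) * x powr (3/2) \<le> e"
  shows "8 * t\<^sup>2 \<le> e / (2 * x)" and "25/4 * t ^ 3 * x \<le> (e / (2 * x))\<^sup>2"
proof -
  have "0 < x"
    using assms by linarith
  have "0 \<le> 5 * t powr (3/2) * x powr (3/2)"
    by simp
  then have "(5 * t powr (3/2) * x powr (3/2))\<^sup>2 \<le> e\<^sup>2"
    by (rule power_mono[OF e])
  then have "25 * t ^ 3 * x ^ 3 \<le> e\<^sup>2"
    using assms \<open>0 < x\<close> by (simp add: power_mult_distrib powr_three_halves_squared)
  then have "25 * t ^ 3 * x ^ 3 / (4 * x\<^sup>2) \<le> e\<^sup>2 / (4 * x\<^sup>2)"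
    by (rule divide_right_mono) simp
  then show sq: "25/4 * t ^ 3 * x \<le> (e / (2 * x))\<^sup>2"
    using \<open>0 < x\<close> by (simp add: power_divide power_mult_distrib field_simps power2_eq_square power3_eq_cube)
  have "0 \<le> t ^ 4"
    by simp
  then have "(8 * t\<^sup>2)\<^sup>2 \<le> 25/4 * t ^ 3 * (11 * t)"
    by (simp add: eval_nat_numeral)
  also have "\<dots> \<le> 25/4 * t ^ 3 * x"
    using assms by (intro mult_left_mono) auto
  finally have "(8 * t\<^sup>2)\<^sup>2 \<le> (e / (2 * x))\<^sup>2"
    using sq by linarith
  moreover have "0 \<le> e"
    using \<open>0 \<le> 5 * t powr (3/2) * x powr (3/2)\<close> e by linarith
  then have "0 \<le> e / (2 * x)"
    using \<open>0 < x\<close> by simp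
  ultimately show "8 * t\<^sup>2 \<le> e / (2 * x)"
    by (rule power2_le_imp_le)
qed

lemma lemma3p6_parameters:
  fixes t n :: nat and e :: real
  assumes "0 < t" and "11 * t \<le> n" and e: "5 * real t powr (3/2) * real n powr (3/2) \<le> e"
  defines "\<delta> \<equiv> e / (2 * real n)"
  shows "\<delta> * real n < e" and "2 * real (2 * t - 1) * real (2 * t - 1) \<le> \<delta>"
    and "2 * (real t)\<^sup>2 * real (2 * t - 1 - 2) * real n < \<delta>\<^sup>2"
proof -
  have "1 \<le> real t" and "11 * real t \<le> real n"
    using assms(1,2) by simp_all
  then have \<delta>_large: "8 * (real t)\<^sup>2 \<le> \<delta>" and \<delta>_sq: "25/4 * real t ^ 3 * real n \<le> \<delta>\<^sup>2"
    using density_bounds e unfolding \<delta>_def by blast+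
  have "0 < \<delta>" and "0 < real n"
    using \<delta>_large \<open>0 < t\<close> \<open>11 * real t \<le> real n\<close> by (auto intro: less_le_trans[rotated])
  then show "\<delta> * real n < e"
    by (simp add: \<delta>_def zero_less_divide_iff)
  have k: "real (2 * t - 1) \<le> 2 * real t" and "real (2 * t - 1 - 2) \<le> 2 * real t"
    by linarith+
  then show "2 * real (2 * t - 1) * real (2 * t - 1) \<le> \<delta>"
    using \<delta>_large mult_mono[OF k k] by (simp add: power2_eq_square)
  have "2 * (real t)\<^sup>2 * real (2 * t - 1 - 2) * real n \<le> 2 * (real t)\<^sup>2 * (2 * real t) * real n"
    using \<open>real (2 * t - 1 - 2) \<le> 2 * real t\<close> by (intro mult_right_mono mult_left_mono) auto
  also have "\<dots> < 25/4 * real t ^ 3 * real n"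
    using \<open>0 < t\<close> \<open>0 < real n\<close> by (simp add: power2_eq_square power3_eq_cube)
  finally show "2 * (real t)\<^sup>2 * real (2 * t - 1 - 2) * real n < \<delta>\<^sup>2"
    using \<delta>_sq by linarith
qed

theorem lemma3p6:
  shows "\<forall>t::nat. t > 0 \<longrightarrow> (\<exists>N::nat. \<forall>n\<ge>N. \<forall>E.
     simple_graph n E \<and> real (card E) \<ge> 5 * real t powr (3/2) * real n powr (3/2) \<longrightarrow>
     (\<exists>P. P \<noteq> {} \<and> rich n E (2*t - 1) (real t ^ 2) P))"
proof (intro allI impI exI[of _ "11 * _"])
  fix t n :: nat and E :: "nat set set"
  assume "t > 0" and "11 * t \<le> n"
    and G: "simple_graph n E \<and> real (card E) \<ge> 5 * real t powr (3/2) * real n powr (3/2)"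
  note parameters = lemma3p6_parameters[OF \<open>t > 0\<close> \<open>11 * t \<le> n\<close> G[THEN conjunct2]]
  show "\<exists>P. P \<noteq> {} \<and> rich n E (2 * t - 1) (real t ^ 2) P"
    using \<open>t > 0\<close> G by (intro exists_rich_paths[OF _ parameters(1) _ parameters(2) _ parameters(3)]) auto
qed

end
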